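(* Let $L$ be an upper semimodular lattice of finite length. Let $\xi=(x_1,\dots,x_k)\in L^k$ and let $z\in L$ with $z\not\le c_1(\xi)$. Put $$P_\xi=\{i: x_i\parallel z\},\qquad B_\xi=\{i: x_i<z\}.$$ If $|P_\xi|\le|B_\xi|$, then $z\notin M(\xi)$.
   Context: A lattice is upper semimodular if for all $x,y$, $x\wedge y\prec x$ implies $y\prec x\vee y$. $d(x,y)$ is the length of a shortest path between $x$ and $y$ in the undirected covering graph of $L$. $c_1(\xi)=x_1\vee\dots\vee x_k$. $M(\xi)$ is the set of medians of $\xi$, i.e. the elements $y\in L$ minimizing $r(y,\xi)=\sum_{i=1}^k d(y,x_i)$. $x\parallel z$ means that $x$ and $z$ are incomparable. *)

theory Defs
  imports Main
begin

definition covers :: "'a::order \<Rightarrow> 'a \<Rightarrow> bool" (infix "\<prec>" 50) where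
  "x \<prec> y \<longleftrightarrow> x < y \<and> \<not> (\<exists>z. x < z \<and> z < y)"

definition upper_semimodular :: "'a::lattice itself \<Rightarrow> bool" where
  "upper_semimodular _ \<longleftrightarrow> (\<forall>x y::'a. inf x y \<prec> x \<longrightarrow> y \<prec> sup x y)"

definition finite_length :: "'a::order itself \<Rightarrow> bool" where
  "finite_length _ \<longleftrightarrow> (\<exists>n. \<forall>C::'a set. Complete_Partial_Order.chain (\<le>) C \<longrightarrow> finite C \<and> card C \<le> n)"

definition cover_edges :: "('a::order \<times> 'a) set" where
  "cover_edges = {(x, y). x \<prec> y \<or> y \<prec> x}"

definition cdist :: "'a::order \<Rightarrow> 'a \<Rightarrow> nat" where
  "cdist x y = (LEAST n. (x, y) \<in> cover_edges ^^ n)"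

definition c1 :: "'a::lattice list \<Rightarrow> 'a" where
  "c1 xs = Sup_fin (set xs)"

definition remote :: "'a::order \<Rightarrow> 'a list \<Rightarrow> nat" where
  "remote y xs = (\<Sum>x\<leftarrow>xs. cdist y x)"

definition medians :: "'a::order list \<Rightarrow> 'a set" where
  "medians xs = {y. \<forall>w. remote y xs \<le> remote w xs}"

end

(*
  By the Jordan--Dedekind chain condition, which upper semimodularity gives in finite length,
  all covering chains between two comparable elements have the same length, so there is a
  height function h with h y = h x + 1 whenever x is covered by y.  The distance in the
  covering graph is then d(a, c) = 2 h(a \<squnion> c) - h a - h c: the path up to a \<squnion> c and down
  again has this length, and along any path the potential 2 h(z \<squnion> c) - h z changes by at
  most 1 per step, because joining with c maps a cover to a cover or an equality.

  Compare z with m = z \<sqinter> c1(\<xi>) < z and put t = h z - h m \<ge> 1.  No x_i lies above z, so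
  every index is in B or in P.  For x_i < z we have x_i \<le> m, so d(z, x_i) - d(m, x_i) = t;
  for x_i \<parallel> z we have m \<squnion> x_i < z \<squnion> x_i, so the difference is at least 2 - t.  Hence
  r(z, \<xi>) - r(m, \<xi>) \<ge> t |B| + (2 - t) |P| > 0 when |P| \<le> |B| and k \<ge> 1.
*)

theory Submission
  imports Defs
begin

lemma weighted_count_pos:
  fixes b p :: nat and t :: int
  assumes "1 \<le> t" "p \<le> b" "0 < b + p"
  shows "0 < int b * t + int p * (2 - t)"
proof (cases "p = 0")
  case True
  then show ?thesis
    using assms by simp
next
  case False
  have "int p * t \<le> int b * t"
    using assms by (simp add: mult_right_mono)
  then show ?thesis
    using False by (simp add: algebra_simps)
qed

lemma finite_length_no_infinite_strict_chain:
  fixes f :: "nat \<Rightarrow> 'a::order"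
  assumes "finite_length TYPE('a)"
    and strict: "\<And>i j. i < j \<Longrightarrow> f i < f j \<or> f j < f i"
  shows False
proof -
  have "inj f"
    by (rule injI, metis strict less_irrefl linorder_neqE_nat)
  moreover have "Complete_Partial_Order.chain (\<le>) (range f)"
    by (rule chainI, auto, metis strict less_imp_le linorder_neqE_nat order_refl)
  ultimately show False
    using assms(1) finite_imageD[of f UNIV] unfolding finite_length_def by auto
qed

lemma finite_length_wf_less:
  assumes "finite_length TYPE('a::order)"
  shows "wf {(x::'a, y). x < y}"
proof (rule ccontr)
  assume "\<not> ?thesis"
  then obtain f :: "nat \<Rightarrow> 'a" where desc: "\<And>i. f (Suc i) < f i"
    unfolding wf_iff_no_infinite_down_chain by auto
  have "f j < f i" if "i < j" for i j
  proof -
    have "f j \<le> f (Suc i)"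
      using lift_Suc_antimono_le[of f, OF less_imp_le[OF desc]] that by simp
    also have "\<dots> < f i" by (rule desc)
    finally show ?thesis .
  qed
  then show False
    by (intro finite_length_no_infinite_strict_chain[OF assms, of f]) blast
qed

lemma finite_length_wf_greater:
  assumes "finite_length TYPE('a::order)"
  shows "wf {(x::'a, y). y < x}"
proof (rule ccontr)
  assume "\<not> ?thesis"
  then obtain f :: "nat \<Rightarrow> 'a" where asc: "\<And>i. f i < f (Suc i)"
    unfolding wf_iff_no_infinite_down_chain by auto
  show False
    by (intro finite_length_no_infinite_strict_chain[OF assms, of f] disjI1
        lift_Suc_mono_less[of f, OF asc])
qed

lemma finite_length_least:
  assumes "finite_length TYPE('a)"
  obtains b :: "'a::lattice" where "\<And>x. b \<le> x"
proof -
  obtain b :: 'a where minimal: "\<And>y. y < b \<Longrightarrow> False"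
    using wfE_min[OF finite_length_wf_less[OF assms] UNIV_I] by auto
  have "b \<le> x" for x
  proof -
    have "inf b x = b"
      using minimal[of "inf b x"] inf_le1[of b x] order.not_eq_order_implies_strict by blast
    then show ?thesis by (simp add: le_iff_inf)
  qed
  then show thesis by (rule that)
qed

lemma covers_imp_less: "x \<prec> y \<Longrightarrow> x < y"
  by (simp add: covers_def)

inductive cover_chain :: "'a::order \<Rightarrow> 'a \<Rightarrow> nat \<Rightarrow> bool" where
  cover_chain_refl: "cover_chain a a 0"
| cover_chain_step: "a \<prec> c \<Longrightarrow> cover_chain c b n \<Longrightarrow> cover_chain a b (Suc n)"

lemma cover_chain_le: "cover_chain a b n \<Longrightarrow> a \<le> b"
  by (induction rule: cover_chain.induct) (auto simp: covers_def)

lemma cover_chain_0D: "cover_chain a b 0 \<Longrightarrow> a = b"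
  by (erule cover_chain.cases) auto

lemma cover_chain_self: "cover_chain a a n \<Longrightarrow> n = 0"
  by (erule cover_chain.cases) (auto simp: covers_def dest: cover_chain_le)

lemma cover_chain_trans: "cover_chain a b n \<Longrightarrow> cover_chain b c m \<Longrightarrow> cover_chain a c (n + m)"
  by (induction rule: cover_chain.induct) (auto intro: cover_chain.intros)

lemma cover_chain_relpow:
  "cover_chain a b n \<Longrightarrow> (a, b) \<in> cover_edges ^^ n \<and> (b, a) \<in> cover_edges ^^ n"
proof (induction rule: cover_chain.induct)
  case (cover_chain_step a c b n)
  then have "(a, c) \<in> cover_edges" "(c, a) \<in> cover_edges"
    by (auto simp: cover_edges_def)
  with cover_chain_step.IH show ?case
    by (meson relpow_Suc_I relpow_Suc_I2)
qed simp

lemma finite_length_covers_below: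
  assumes "finite_length TYPE('a::order)" and "(a::'a) < b"
  obtains c where "a \<prec> c" and "c \<le> b"
proof -
  obtain c where c: "c \<in> {c. a < c \<and> c \<le> b}"
    and minimal: "\<And>y. y < c \<Longrightarrow> y \<notin> {c. a < c \<and> c \<le> b}"
    using wfE_min[OF finite_length_wf_less[OF assms(1)], of b "{c. a < c \<and> c \<le> b}"] assms(2)
    by auto
  have "\<not> (a < y \<and> y < c)" for y
    using minimal[of y] less_le_trans[of y c b] c by auto
  with c have "a \<prec> c"
    unfolding covers_def by blast
  with c show thesis using that by blast
qed

lemma finite_length_cover_chain_exists:
  assumes fl: "finite_length TYPE('a::order)" and "(a::'a) \<le> b"
  shows "\<exists>n. cover_chain a b n"
  using \<open>a \<le> b\<close>
proof (induction a rule: wf_induct_rule[OF finite_length_wf_greater[OF fl]])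
  case (1 a)
  show ?case
  proof (cases "a = b")
    case True
    then show ?thesis using cover_chain_refl by blast
  next
    case False
    with "1.prems" obtain c where "a \<prec> c" "c \<le> b"
      using finite_length_covers_below[OF fl] by (metis order_less_le)
    moreover from this obtain n where "cover_chain c b n"
      using "1.IH" by (auto simp: covers_def)
    ultimately show ?thesis using cover_chain_step by blast
  qed
qed

lemma usm_sup_covers:
  fixes z z' x :: "'a::lattice"
  assumes usm: "upper_semimodular TYPE('a)" and "z \<prec> z'"
  shows "sup z x = sup z' x \<or> sup z x \<prec> sup z' x"
proof -
  have "z \<le> z'"
    using covers_imp_less[OF \<open>z \<prec> z'\<close>] by simp
  show ?thesis
  proof (cases "z' \<le> sup z x")
    case True
    have "sup z' x = sup z x"
      by (rule antisym[OF le_supI[OF True sup_ge2] sup_mono[OF \<open>z \<le> z'\<close> order_refl]])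
    then show ?thesis by simp
  next
    case False
    have "z \<le> inf z' (sup z x)"
      using \<open>z \<le> z'\<close> by simp
    moreover have "inf z' (sup z x) < z'"
      using False inf_le1[of z' "sup z x"] by (auto simp: order_less_le le_iff_inf)
    ultimately have "inf z' (sup z x) = z"
      using \<open>z \<prec> z'\<close> unfolding covers_def by (metis order_less_le)
    then have "sup z x \<prec> sup z' (sup z x)"
      using usm \<open>z \<prec> z'\<close> unfolding upper_semimodular_def by simp
    moreover have "sup z' (sup z x) = sup z' x"
      using \<open>z \<le> z'\<close> by (simp add: sup_absorb1 sup_assoc[symmetric])
    ultimately show ?thesis by simp
  qed
qed

lemma usm_covers_sup:
  fixes a x y :: "'a::lattice"
  assumes usm: "upper_semimodular TYPE('a)"
    and "a \<prec> x" "a \<prec> y" "x \<noteq> y"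
  shows "x \<prec> sup x y"
proof -
  have "sup a x = x"
    using covers_imp_less[OF \<open>a \<prec> x\<close>] by (simp add: sup_absorb2)
  moreover have "x \<noteq> sup y x"
  proof
    assume "x = sup y x"
    then have "a < y" "y \<le> x"
      using \<open>a \<prec> y\<close> by (auto simp: covers_def le_iff_sup sup_commute)
    with assms(2,4) show False
      unfolding covers_def by (metis order_less_le)
  qed
  ultimately show ?thesis
    using usm_sup_covers[OF usm \<open>a \<prec> y\<close>, of x] by (simp add: sup_commute)
qed

lemma cover_chain_length_unique:
  fixes a b :: "'a::lattice"
  assumes usm: "upper_semimodular TYPE('a)" and fl: "finite_length TYPE('a)"
  shows "cover_chain a b n \<Longrightarrow> cover_chain a b m \<Longrightarrow> n = m"
proof (induction n arbitrary: a m rule: less_induct)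
  case (less n a m)
  show ?case
  proof (cases "a = b")
    case True
    then have "n = 0" "m = 0"
      using less.prems cover_chain_self by auto
    then show ?thesis by simp
  next
    case False
    obtain x n' where "n = Suc n'" "a \<prec> x" "cover_chain x b n'"
      using less.prems(1) False by (auto elim: cover_chain.cases)
    obtain y m' where "m = Suc m'" "a \<prec> y" "cover_chain y b m'"
      using less.prems(2) False by (auto elim: cover_chain.cases)
    show ?thesis
    proof (cases "x = y")
      case True
      then show ?thesis
        using less.IH \<open>n = Suc n'\<close> \<open>m = Suc m'\<close> \<open>cover_chain x b n'\<close> \<open>cover_chain y b m'\<close>
        by simp
    next
      case False
      have "sup x y \<le> b"
        using \<open>cover_chain x b n'\<close> \<open>cover_chain y b m'\<close> by (simp add: cover_chain_le)
      then obtain k where k: "cover_chain (sup x y) b k"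
        using finite_length_cover_chain_exists[OF fl] by blast
      have "cover_chain x b (Suc k)"
        using usm_covers_sup[OF usm \<open>a \<prec> x\<close> \<open>a \<prec> y\<close> False] k by (rule cover_chain_step)
      moreover have "cover_chain y b (Suc k)"
        using usm_covers_sup[OF usm \<open>a \<prec> y\<close> \<open>a \<prec> x\<close>] False k
        by (simp add: sup_commute cover_chain_step)
      ultimately show ?thesis
        using less.IH \<open>n = Suc n'\<close> \<open>m = Suc m'\<close> \<open>cover_chain x b n'\<close> \<open>cover_chain y b m'\<close>
        by (metis lessI)
    qed
  qed
qed

text \<open>Only meaningful when \<open>b\<close> is the least element and chains are unique in length;
  otherwise the description is unspecified.\<close>

definition height :: "'a::order \<Rightarrow> 'a \<Rightarrow> nat" where
  "height b x = (THE n. cover_chain b x n)"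

context
  fixes b0 :: "'a::lattice"
  assumes usm: "upper_semimodular TYPE('a)"
    and fl: "finite_length TYPE('a)"
    and least: "\<And>x. b0 \<le> x"
begin

lemma cover_chain_height: "cover_chain b0 x (height b0 x)"
proof -
  obtain n where "cover_chain b0 x n"
    using finite_length_cover_chain_exists[OF fl least] by blast
  then have "\<exists>!n. cover_chain b0 x n"
    using cover_chain_length_unique[OF usm fl] by blast
  then show ?thesis
    unfolding height_def by (rule theI')
qed

lemma height_cover_chain:
  assumes "cover_chain x y k"
  shows "height b0 y = height b0 x + k"
  using cover_chain_trans[OF cover_chain_height assms]
  by (rule cover_chain_length_unique[OF usm fl cover_chain_height])

lemma height_mono: "x \<le> y \<Longrightarrow> height b0 x \<le> height b0 y"
  using finite_length_cover_chain_exists[OF fl] height_cover_chain by fastforce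

lemma height_strict_mono:
  assumes "x < y"
  shows "height b0 x < height b0 y"
proof -
  obtain k where k: "cover_chain x y k"
    using finite_length_cover_chain_exists[OF fl] assms by fastforce
  moreover have "k \<noteq> 0"
    using cover_chain_0D[of x y] k assms by (metis less_irrefl)
  ultimately show ?thesis
    using height_cover_chain by simp
qed

lemma height_covers: "x \<prec> y \<Longrightarrow> height b0 y = Suc (height b0 x)"
  using height_cover_chain[OF cover_chain_step[OF _ cover_chain_refl]] by simp

lemma cover_edges_relpow_via_upper_bound:
  assumes "a \<le> s" "c \<le> s"
  shows "(a, c) \<in> cover_edges ^^ ((height b0 s - height b0 a) + (height b0 s - height b0 c))"
proof -
  obtain k l where "cover_chain a s k" "cover_chain c s l"
    using finite_length_cover_chain_exists[OF fl] assms by blast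
  then have "(a, s) \<in> cover_edges ^^ k" "(s, c) \<in> cover_edges ^^ l"
    and "k = height b0 s - height b0 a" "l = height b0 s - height b0 c"
    using cover_chain_relpow[of a s k] cover_chain_relpow[of c s l]
      height_cover_chain[of a s k] height_cover_chain[of c s l] by auto
  then show ?thesis by (auto simp: relpow_add)
qed

lemma sup_height_potential_step:
  assumes "(z, y) \<in> cover_edges"
  shows "\<bar>(2 * int (height b0 (sup z x)) - int (height b0 z))
          - (2 * int (height b0 (sup y x)) - int (height b0 y))\<bar> \<le> 1"
proof -
  have "\<bar>(2 * int (height b0 (sup p x)) - int (height b0 p))
          - (2 * int (height b0 (sup q x)) - int (height b0 q))\<bar> \<le> 1" if "p \<prec> q" for p q
    using usm_sup_covers[OF usm that, of x] height_covers[OF that] height_covers by auto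
  with assms show ?thesis
    unfolding cover_edges_def by fastforce
qed

lemma sup_height_le_relpow:
  "(z, x) \<in> cover_edges ^^ n
    \<Longrightarrow> 2 * int (height b0 (sup z x)) - int (height b0 z) - int (height b0 x) \<le> int n"
proof (induction n arbitrary: z)
  case (Suc n)
  then obtain y where "(z, y) \<in> cover_edges" "(y, x) \<in> cover_edges ^^ n"
    by (meson relpow_Suc_E2)
  with Suc.IH sup_height_potential_step[of z y x] show ?case
    by fastforce
qed simp

lemma cdist_eq_height:
  "int (cdist a c) = 2 * int (height b0 (sup a c)) - int (height b0 a) - int (height b0 c)"
proof -
  have path: "(a, c) \<in> cover_edges ^^
      ((height b0 (sup a c) - height b0 a) + (height b0 (sup a c) - height b0 c))"
    by (rule cover_edges_relpow_via_upper_bound) simp_all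
  then have "cdist a c \<le> (height b0 (sup a c) - height b0 a) + (height b0 (sup a c) - height b0 c)"
    unfolding cdist_def by (rule Least_le)
  moreover have "(a, c) \<in> cover_edges ^^ cdist a c"
    unfolding cdist_def using path by (rule LeastI)
  moreover have "height b0 a \<le> height b0 (sup a c)" "height b0 c \<le> height b0 (sup a c)"
    by (simp_all add: height_mono)
  ultimately show ?thesis
    using sup_height_le_relpow[of a c "cdist a c"] by linarith
qed

lemma cdist_diff_below:
  assumes "x \<le> m" "m \<le> z"
  shows "int (cdist z x) - int (cdist m x) = int (height b0 z) - int (height b0 m)"
  using cdist_eq_height[of z x] cdist_eq_height[of m x] assms
  by (simp add: sup_absorb1 order_trans[OF assms])

lemma cdist_diff_not_below:
  assumes "m \<le> z" "\<not> z \<le> sup m x"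
  shows "2 - (int (height b0 z) - int (height b0 m)) \<le> int (cdist z x) - int (cdist m x)"
proof -
  have "sup m x < sup z x"
    using assms sup_mono[OF assms(1) order_refl, of x] by (metis order_less_le sup_ge1)
  then show ?thesis
    using cdist_eq_height[of z x] cdist_eq_height[of m x] height_strict_mono by fastforce
qed

lemma cdist_diff_inf_c1:
  assumes "\<not> z \<le> c1 xs" "x \<in> set xs"
  defines "m \<equiv> inf z (c1 xs)"
  shows "x < z \<Longrightarrow> int (cdist z x) - int (cdist m x) = int (height b0 z) - int (height b0 m)"
    and "\<not> x \<le> z
      \<Longrightarrow> 2 - (int (height b0 z) - int (height b0 m)) \<le> int (cdist z x) - int (cdist m x)"
proof -
  have "x \<le> c1 xs"
    unfolding c1_def using assms(2) by (simp add: Sup_fin.coboundedI)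
  have "m \<le> z"
    unfolding m_def by simp
  show "int (cdist z x) - int (cdist m x) = int (height b0 z) - int (height b0 m)" if "x < z"
    using cdist_diff_below[OF _ \<open>m \<le> z\<close>] that \<open>x \<le> c1 xs\<close>
    unfolding m_def by (simp add: less_imp_le)
  have "\<not> z \<le> sup m x"
    using assms(1) \<open>x \<le> c1 xs\<close> order_trans[of z "sup m x" "c1 xs"] unfolding m_def by auto
  then show "2 - (int (height b0 z) - int (height b0 m)) \<le> int (cdist z x) - int (cdist m x)"
    by (rule cdist_diff_not_below[OF \<open>m \<le> z\<close>])
qed

lemma remote_inf_c1_less:
  fixes xs :: "'a list"
  assumes "xs \<noteq> []" and "\<not> z \<le> c1 xs"
    and "card {i. i < length xs \<and> \<not> xs ! i \<le> z \<and> \<not> z \<le> xs ! i}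
           \<le> card {i. i < length xs \<and> xs ! i < z}"
  shows "remote (inf z (c1 xs)) xs < remote z xs"
proof -
  define m where "m = inf z (c1 xs)"
  define t where "t = int (height b0 z) - int (height b0 m)"
  define B where "B = {i. i < length xs \<and> xs ! i < z}"
  define P where "P = {i. i < length xs \<and> \<not> xs ! i \<le> z \<and> \<not> z \<le> xs ! i}"
  define \<delta> where "\<delta> i = int (cdist z (xs ! i)) - int (cdist m (xs ! i))" for i
  have "m \<le> z" "m \<noteq> z"
    using assms(2) unfolding m_def by (auto simp: le_iff_inf inf_commute)
  then have "1 \<le> t"
    using height_strict_mono[of m z] unfolding t_def by (simp add: order_less_le)
  have not_above: "\<not> z \<le> xs ! i" if "i < length xs" for i
    using assms(2) that order_trans[of z "xs ! i" "c1 xs"]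
    unfolding c1_def by (auto simp: Sup_fin.coboundedI)
  have indices: "{..<length xs} = B \<union> P"
    unfolding B_def P_def by (auto simp: order.strict_iff_not dest: not_above)
  have "B \<inter> P = {}"
    unfolding B_def P_def by auto
  have "\<delta> i = t" if "i \<in> B" for i
    using that cdist_diff_inf_c1(1)[OF assms(2)] unfolding B_def \<delta>_def t_def m_def by simp
  moreover have "2 - t \<le> \<delta> i" if "i \<in> P" for i
    using that cdist_diff_inf_c1(2)[OF assms(2)] unfolding P_def \<delta>_def t_def m_def by simp
  ultimately have "int (card B) * t + int (card P) * (2 - t) \<le> sum \<delta> B + sum \<delta> P"
    by (intro add_mono sum_bounded_below) auto
  also have "\<dots> = (\<Sum>i<length xs. \<delta> i)"
    using indices \<open>B \<inter> P = {}\<close> finite_lessThan[of "length xs"]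
    by (metis finite_Un sum.union_disjoint)
  also have "\<dots> = int (remote z xs) - int (remote m xs)"
    by (simp add: \<delta>_def remote_def sum_list_sum_nth atLeast0LessThan sum_subtractf)
  finally have lower: "int (card B) * t + int (card P) * (2 - t)
      \<le> int (remote z xs) - int (remote m xs)" .
  have "card B + card P = length xs"
    using indices \<open>B \<inter> P = {}\<close> card_Un_disjoint[of B P] finite_lessThan[of "length xs"]
    by (metis card_lessThan finite_Un)
  then have "0 < card B + card P"
    using assms(1) by simp
  have "card P \<le> card B"
    using assms(3) unfolding B_def P_def .
  then have "0 < int (card B) * t + int (card P) * (2 - t)"
    using weighted_count_pos[OF \<open>1 \<le> t\<close> _ \<open>0 < card B + card P\<close>] by simp
  with lower show ?thesis
    unfolding m_def by linarith
qed

end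

theorem lemma3p2:
  fixes xs :: "'a::lattice list" and z :: 'a
  assumes "upper_semimodular TYPE('a)"
    and "finite_length TYPE('a)"
    and "xs \<noteq> []"
    and "\<not> z \<le> c1 xs"
    and "card {i. i < length xs \<and> \<not> xs ! i \<le> z \<and> \<not> z \<le> xs ! i}
           \<le> card {i. i < length xs \<and> xs ! i < z}"
  shows "z \<notin> medians xs"
proof
  assume "z \<in> medians xs"
  then have "remote z xs \<le> remote (inf z (c1 xs)) xs"
    unfolding medians_def by blast
  moreover obtain b0 :: 'a where least: "\<And>x. b0 \<le> x"
    using finite_length_least[OF assms(2)] by blast
  ultimately show False
    using remote_inf_c1_less[OF assms(1,2) least assms(3-5)] by simp
qed

end
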